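(* Let $a\in\mathfrak{u}(n)$ be diagonal, $M$ its adjoint orbit, $\gamma\in C_a(\mathbb{R},M)$ with $\gamma=gag^{-1}$, $g^{-1}g_x=u=\Phi(\gamma)$, $g(-\infty)=I$, and let $\eta=gvg^{-1}$ with $v\in\mathcal{S}(\mathbb{R},\mathfrak{u}(n)_a^\perp)$ (a vector field along $\gamma$ tangent to $M$). Then there exists a unique smooth vector field $\zeta$ along $\gamma$ normal to $M$ (i.e. $\zeta(x)\in g(x)\mathfrak{u}(n)_a g(x)^{-1}$ for all $x$) such that $(\eta+\zeta)_x(x)$ is tangent to $M$ at $\gamma(x)$ for all $x$ and $\zeta(-\infty)=0$. Moreover $L_\gamma(\eta)=(\eta+\zeta)_x$.
   Context: $\mathfrak{u}(n)$: skew-Hermitian matrices with $\langle x,y\rangle=-\mathrm{tr}(xy)$; $\mathfrak{u}(n)_a$ centralizer of $a$, $\mathfrak{u}(n)_a^\perp$ its orthogonal complement, $\pi_a,\pi_a^\perp$ orthogonal projections. The tangent space of $M$ at $gag^{-1}$ is $g\,\mathfrak{u}(n)_a^\perp g^{-1}$ and the normal space is $g\,\mathfrak{u}(n)_ag^{-1}$. $C_a(\mathbb{R},M)$: smooth $\gamma:\mathbb{R}\to M$, $\gamma(-\infty)=a$, $\gamma_x$ Schwartz. $\Phi(\gamma)=g^{-1}g_x$ for the unique $g$ with $\gamma=gag^{-1}$, $g(-\infty)=I$, $g^{-1}g_x\in\mathfrak{u}(n)_a^\perp$. For $u\in\mathcal{S}(\mathbb{R},\mathfrak{u}(n)_a^\perp)$,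 $P_u(v)=v_x+\pi_a^\perp([u,v])-[u,T_u(v)]$ with $T_u(v)(x)=\int_{-\infty}^x\pi_a([u,v])\,dy$. The operator $L_\gamma$ is defined by $L_\gamma(gvg^{-1})=gP_u(v)g^{-1}$. *)

theory Defs
  imports "HOL-Analysis.Analysis"
begin

type_synonym 'n cmat = "complex^'n^'n"

definition cadj :: "'n::finite cmat \<Rightarrow> 'n cmat" where
  "cadj A = (\<chi> i j. cnj (A $ j $ i))"

definition mtrace :: "'n::finite cmat \<Rightarrow> complex" where
  "mtrace A = (\<Sum>i\<in>UNIV. A $ i $ i)"

definition unitary :: "'n::finite cmat \<Rightarrow> bool" where
  "unitary g \<longleftrightarrow> cadj g ** g = mat 1"

definition un :: "'n::finite cmat set" where
  "un = {x. cadj x = - x}"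

text \<open>inner product <x,y> = -tr(xy) (real on u(n))\<close>
definition ip :: "'n::finite cmat \<Rightarrow> 'n cmat \<Rightarrow> real" where
  "ip x y = - Re (mtrace (x ** y))"

definition bracket :: "'n::finite cmat \<Rightarrow> 'n cmat \<Rightarrow> 'n cmat" where
  "bracket x y = x ** y - y ** x"

definition is_diag :: "'n::finite cmat \<Rightarrow> bool" where
  "is_diag a \<longleftrightarrow> (\<forall>i j. i \<noteq> j \<longrightarrow> a $ i $ j = 0)"

definition cent :: "'n::finite cmat \<Rightarrow> 'n cmat set" where
  "cent a = {x \<in> un. x ** a = a ** x}"

definition cent_perp :: "'n::finite cmat \<Rightarrow> 'n cmat set" where
  "cent_perp a = {y \<in> un. \<forall>z\<in>cent a. ip y z = 0}"

definition proj_a :: "'n::finite cmat \<Rightarrow> 'n cmat \<Rightarrow> 'n cmat" where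
  "proj_a a x = (THE y. y \<in> cent a \<and> (\<forall>z\<in>cent a. ip (x - y) z = 0))"

definition proj_perp :: "'n::finite cmat \<Rightarrow> 'n cmat \<Rightarrow> 'n cmat" where
  "proj_perp a x = x - proj_a a x"

definition orbit :: "'n::finite cmat \<Rightarrow> 'n cmat set" where
  "orbit a = {g ** a ** matrix_inv g | g. unitary g}"

fun vderiv :: "nat \<Rightarrow> (real \<Rightarrow> 'a::real_normed_vector) \<Rightarrow> real \<Rightarrow> 'a" where
  "vderiv 0 f = f"
| "vderiv (Suc k) f = (\<lambda>x. vector_derivative (vderiv k f) (at x))"

definition smooth :: "(real \<Rightarrow> 'a::real_normed_vector) \<Rightarrow> bool" where
  "smooth f \<longleftrightarrow> (\<forall>k x. vderiv k f differentiable (at x))"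

definition schwartz :: "(real \<Rightarrow> 'a::real_normed_vector) \<Rightarrow> bool" where
  "schwartz f \<longleftrightarrow> smooth f \<and>
     (\<forall>k m. bounded (range (\<lambda>x. \<bar>x\<bar> ^ m * norm (vderiv k f x))))"

definition Ca :: "'n::finite cmat \<Rightarrow> (real \<Rightarrow> 'n cmat) set" where
  "Ca a = {\<gamma>. smooth \<gamma> \<and> (\<forall>x. \<gamma> x \<in> orbit a) \<and> (\<gamma> \<longlongrightarrow> a) at_bot
              \<and> schwartz (vderiv 1 \<gamma>)}"

definition Top :: "'n::finite cmat \<Rightarrow> (real \<Rightarrow> 'n cmat) \<Rightarrow> (real \<Rightarrow> 'n cmat) \<Rightarrow> real \<Rightarrow> 'n cmat" where
  "Top a u v x = integral {..x} (\<lambda>y. proj_a a (bracket (u y) (v y)))"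

definition Pop :: "'n::finite cmat \<Rightarrow> (real \<Rightarrow> 'n cmat) \<Rightarrow> (real \<Rightarrow> 'n cmat) \<Rightarrow> real \<Rightarrow> 'n cmat" where
  "Pop a u v x = vderiv 1 v x + proj_perp a (bracket (u x) (v x)) - bracket (u x) (Top a u v x)"

text \<open>L_gamma(g v g^{-1}) = g P_u(v) g^{-1}, with u = g^{-1} g_x\<close>
definition Lop :: "'n::finite cmat \<Rightarrow> (real \<Rightarrow> 'n cmat) \<Rightarrow> (real \<Rightarrow> 'n cmat) \<Rightarrow> real \<Rightarrow> 'n cmat" where
  "Lop a g v x = g x ** Pop a (\<lambda>y. matrix_inv (g y) ** vderiv 1 g y) v x ** matrix_inv (g x)"

end

theory Submission
  imports Defs
begin

text \<open>Write the normal field as \<open>\<zeta> = g w g\<inverse>\<close> with \<open>w\<close> in the centralizer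
  \<open>\<^bold>u(n)\<^sub>a\<close>. Since \<open>g\<inverse> (g y g\<inverse>)' g = y' + [u, y]\<close>, tangency of \<open>(\<eta> + \<zeta>)'\<close> says that the
  \<open>\<^bold>u(n)\<^sub>a\<close>-component of \<open>v' + w' + [u, v + w]\<close> vanishes. For diagonal \<open>a\<close>, \<open>v'\<close> and
  \<open>[u, w]\<close> are orthogonal to \<open>\<^bold>u(n)\<^sub>a\<close>, so this is the linear ODE \<open>w' = - \<pi>\<^sub>a [u, v]\<close>,
  whose unique solution with \<open>w(-\<infinity>) = 0\<close> is \<open>w = - T\<^sub>u(v)\<close>. The integral converges
  because \<open>u\<close> is bounded (\<open>\<gamma>' = g [u, a] g\<inverse>\<close> is, and \<open>ad a\<close> is invertible on
  \<open>\<^bold>u(n)\<^sub>a\<^sup>\<bottom>\<close>) while \<open>v\<close> decays like \<open>1 / (1 + x\<^sup>2)\<close>. Substituting \<open>w = - T\<^sub>u(v)\<close>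
  into \<open>v' + w' + [u, v + w]\<close> gives exactly \<open>P\<^sub>u(v)\<close>.\<close>

section \<open>Smooth functions on the real line\<close>

lemma vderiv_Suc_inner: "vderiv (Suc k) f = vderiv k (vderiv 1 f)"
  by (induction k) auto

lemma vderiv_1_at: "(f has_vector_derivative f') (at x) \<Longrightarrow> vderiv 1 f x = f'"
  by (simp add: vector_derivative_at)

lemma smooth_iff_vderiv_1:
  "smooth f \<longleftrightarrow> (\<forall>x. f differentiable at x) \<and> smooth (vderiv 1 f)"
  unfolding smooth_def vderiv_Suc_inner[symmetric]
  by (metis vderiv.simps(1) not0_implies_Suc)

lemma smooth_has_vector_derivative:
  "smooth f \<Longrightarrow> (f has_vector_derivative vderiv 1 f x) (at x)"
  unfolding smooth_def by (metis vderiv.simps vector_derivative_works One_nat_def)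

lemma smooth_vderiv_1: "smooth f \<Longrightarrow> smooth (vderiv 1 f)"
  using smooth_iff_vderiv_1 by blast

lemma smooth_imp_continuous_on: "smooth f \<Longrightarrow> continuous_on UNIV f"
  by (intro continuous_at_imp_continuous_on ballI differentiable_imp_continuous_within)
    (metis smooth_def vderiv.simps(1))

lemma smooth_if_has_vector_derivative:
  assumes "\<And>x. (f has_vector_derivative f' x) (at x)" and "smooth f'"
  shows "smooth f"
proof -
  have "vderiv 1 f = f'"
    using assms(1) vderiv_1_at by blast
  then show ?thesis
    using assms by (auto simp: smooth_iff_vderiv_1[of f] intro: differentiableI_vector)
qed

lemma smooth_coinduct:
  assumes "\<And>f. f \<in> S \<Longrightarrow> (\<forall>x. f differentiable at x) \<and> vderiv 1 f \<in> S" and "f \<in> S"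
  shows "smooth f"
proof -
  have "\<forall>f\<in>S. \<forall>x. vderiv k f differentiable at x" for k
    by (induction k) (use assms(1) in \<open>auto simp only: vderiv_Suc_inner vderiv.simps(1)\<close>)
  then show ?thesis
    using assms(2) unfolding smooth_def by blast
qed

lemma smooth_bounded_linear:
  assumes L: "bounded_linear L" and "smooth f"
  shows "smooth (\<lambda>x. L (f x))"
proof (rule smooth_coinduct[where S = "{(\<lambda>x. L (f x)) | f. smooth f}"])
  fix h assume "h \<in> {(\<lambda>x. L (f x)) | f. smooth f}"
  then obtain f where h: "h = (\<lambda>x. L (f x))" and f: "smooth f"
    by blast
  have d: "(h has_vector_derivative L (vderiv 1 f x)) (at x)" for x
    unfolding h by (rule bounded_linear.has_vector_derivative[OF L smooth_has_vector_derivative[OF f]])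
  then have "vderiv 1 h = (\<lambda>x. L (vderiv 1 f x))"
    using vderiv_1_at by blast
  then show "(\<forall>x. h differentiable at x) \<and> vderiv 1 h \<in> {(\<lambda>x. L (f x)) | f. smooth f}"
    using d smooth_vderiv_1[OF f] by (auto intro: differentiableI_vector)
qed (use assms in auto)

lemma vderiv_add:
  assumes "\<And>j x. j < k \<Longrightarrow> vderiv j f differentiable at x"
    and "\<And>j x. j < k \<Longrightarrow> vderiv j g differentiable at x"
  shows "vderiv k (\<lambda>x. f x + g x) = (\<lambda>x. vderiv k f x + vderiv k g x)"
  using assms
proof (induction k)
  case (Suc k)
  then have IH: "vderiv k (\<lambda>x. f x + g x) = (\<lambda>x. vderiv k f x + vderiv k g x)"
    by auto
  have "((\<lambda>x. vderiv k f x + vderiv k g x) has_vector_derivative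
          vderiv (Suc k) f x + vderiv (Suc k) g x) (at x)" for x
    using Suc.prems[of k x]
    by (auto intro!: has_vector_derivative_add simp: vector_derivative_works[symmetric])
  then show ?case
    by (auto simp: IH vector_derivative_at)
qed simp

lemma smooth_bounded_bilinear:
  fixes B :: "'a::real_normed_vector \<Rightarrow> 'b::real_normed_vector \<Rightarrow> 'c::real_normed_vector"
  assumes B: "bounded_bilinear B" and "smooth f" and "smooth g"
  shows "smooth (\<lambda>x. B (f x) (g x))"
proof -
  have "\<forall>(f::real \<Rightarrow> 'a) (g::real \<Rightarrow> 'b). smooth f \<longrightarrow> smooth g \<longrightarrow>
          (\<forall>x. vderiv k (\<lambda>x. B (f x) (g x)) differentiable at x)" for k
  proof (induction k rule: less_induct)
    case (less k)
    show ?case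
    proof (intro allI impI)
      fix f :: "real \<Rightarrow> 'a" and g :: "real \<Rightarrow> 'b" and x
      assume f: "smooth f" and g: "smooth g"
      note df = smooth_has_vector_derivative[OF f] and dg = smooth_has_vector_derivative[OF g]
      show "vderiv k (\<lambda>x. B (f x) (g x)) differentiable at x"
      proof (cases k)
        case 0
        then show ?thesis
          by (auto intro!: differentiableI_vector bounded_bilinear.has_vector_derivative[OF B df dg])
      next
        case (Suc m)
        have lower: "vderiv j (\<lambda>x. B (f x) (vderiv 1 g x)) differentiable at y"
          "vderiv j (\<lambda>x. B (vderiv 1 f x) (g x)) differentiable at y" if "j \<le> m" for j y
          using less.IH[of j] that Suc f g smooth_vderiv_1 by auto
        have "vderiv 1 (\<lambda>x. B (f x) (g x)) = (\<lambda>x. B (f x) (vderiv 1 g x) + B (vderiv 1 f x) (g x))"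
          using vderiv_1_at bounded_bilinear.has_vector_derivative[OF B df dg] by blast
        then have "vderiv k (\<lambda>x. B (f x) (g x)) =
            (\<lambda>x. vderiv m (\<lambda>x. B (f x) (vderiv 1 g x)) x + vderiv m (\<lambda>x. B (vderiv 1 f x) (g x)) x)"
          using lower by (simp only: Suc vderiv_Suc_inner) (intro vderiv_add, auto)
        then show ?thesis
          using lower by (auto intro!: differentiable_add)
      qed
    qed
  qed
  then show ?thesis
    using assms unfolding smooth_def by blast
qed

section \<open>Complex matrices\<close>

lemma scaleR_complex: "r *\<^sub>R (z::complex) = complex_of_real r * z"
  by (simp add: scaleR_conv_of_real)

lemma bounded_bilinear_matrix_mult:
  "bounded_bilinear ((**) :: 'n::finite cmat \<Rightarrow> 'n cmat \<Rightarrow> 'n cmat)"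
proof -
  have "bilinear ((**) :: 'n cmat \<Rightarrow> 'n cmat \<Rightarrow> 'n cmat)"
    unfolding bilinear_def
    by (auto intro!: linearI simp: matrix_matrix_mult_def vec_eq_iff sum_distrib_left
        sum.distrib algebra_simps scaleR_complex)
  then show ?thesis
    using bilinear_conv_bounded_bilinear by blast
qed

lemma bounded_bilinear_bracket:
  "bounded_bilinear (bracket :: 'n::finite cmat \<Rightarrow> 'n cmat \<Rightarrow> 'n cmat)"
proof -
  have "bilinear (bracket :: 'n cmat \<Rightarrow> 'n cmat \<Rightarrow> 'n cmat)"
    unfolding bilinear_def bracket_def
    by (auto intro!: linearI simp: matrix_matrix_mult_def vec_eq_iff sum_distrib_left
        sum.distrib algebra_simps scaleR_complex sum_subtractf)
  then show ?thesis
    using bilinear_conv_bounded_bilinear by blast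
qed

lemmas matrix_mult_add_left = bounded_bilinear.add_left[OF bounded_bilinear_matrix_mult]
lemmas matrix_mult_add_right = bounded_bilinear.add_right[OF bounded_bilinear_matrix_mult]
lemmas matrix_mult_diff_left = bounded_bilinear.diff_left[OF bounded_bilinear_matrix_mult]
lemmas matrix_mult_diff_right = bounded_bilinear.diff_right[OF bounded_bilinear_matrix_mult]
lemmas matrix_mult_minus_left = bounded_bilinear.minus_left[OF bounded_bilinear_matrix_mult]
lemmas matrix_mult_minus_right = bounded_bilinear.minus_right[OF bounded_bilinear_matrix_mult]

lemma tendsto_matrix_sandwich_0:
  fixes A B y :: "'a \<Rightarrow> 'n::finite cmat"
  assumes "(A \<longlongrightarrow> A0) F" and "(B \<longlongrightarrow> B0) F" and "(y \<longlongrightarrow> 0) F"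
  shows "((\<lambda>t. A t ** y t ** B t) \<longlongrightarrow> 0) F"
  using bounded_bilinear.tendsto[OF bounded_bilinear_matrix_mult
      bounded_bilinear.tendsto[OF bounded_bilinear_matrix_mult assms(1,3)] assms(2)]
  by (simp add: bounded_bilinear.zero_left[OF bounded_bilinear_matrix_mult]
      bounded_bilinear.zero_right[OF bounded_bilinear_matrix_mult])

lemma bounded_linear_cadj: "bounded_linear (cadj :: 'n::finite cmat \<Rightarrow> 'n cmat)"
proof -
  have "linear (cadj :: 'n cmat \<Rightarrow> 'n cmat)"
    by (auto intro!: linearI simp: cadj_def vec_eq_iff scaleR_complex)
  then show ?thesis
    using linear_conv_bounded_linear by blast
qed

lemma cadj_cadj [simp]: "cadj (cadj A) = A"
  by (simp add: cadj_def vec_eq_iff)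

lemma cadj_mult: "cadj (A ** B) = cadj B ** cadj A"
  by (simp add: cadj_def vec_eq_iff matrix_matrix_mult_def mult.commute)

lemma cadj_diff: "cadj (A - B) = cadj A - cadj B"
  by (simp add: cadj_def vec_eq_iff)

lemma cadj_mat_1 [simp]: "cadj (mat 1) = mat 1"
  by (simp add: cadj_def vec_eq_iff mat_def)

lemma unitary_mult_cadj: "unitary g \<Longrightarrow> g ** cadj g = mat 1"
  unfolding unitary_def using matrix_left_right_inverse by blast

lemma unitary_cadj: "unitary g \<Longrightarrow> unitary (cadj g)"
  by (simp add: unitary_def unitary_mult_cadj)

lemma unitary_matrix_inv:
  assumes g: "unitary g"
  shows "matrix_inv g = cadj g"
  unfolding matrix_inv_def
proof (rule some_equality)
  show "g ** cadj g = mat 1 \<and> cadj g ** g = mat 1"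
    using g unfolding unitary_def by (simp add: unitary_mult_cadj[OF g])
  fix A assume "g ** A = mat 1 \<and> A ** g = mat 1"
  then have "A ** (g ** cadj g) = cadj g"
    by (simp add: matrix_mul_assoc)
  then show "A = cadj g"
    by (simp add: unitary_mult_cadj[OF g])
qed

lemma unitary_nth_le_1:
  assumes "unitary g"
  shows "norm (g $ i $ j) \<le> 1"
proof -
  have "(cadj g ** g) $ j $ j = 1"
    using assms unfolding unitary_def by (simp add: mat_def)
  then have "(\<Sum>k\<in>UNIV. g $ k $ j * cnj (g $ k $ j)) = 1"
    by (simp add: matrix_matrix_mult_def cadj_def mult.commute)
  then have "(\<Sum>k\<in>UNIV. complex_of_real ((cmod (g $ k $ j))\<^sup>2)) = 1"
    by (simp only: complex_norm_square)
  then have "(\<Sum>k\<in>UNIV. (cmod (g $ k $ j))\<^sup>2) = 1"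
    by (metis of_real_eq_1_iff of_real_sum)
  moreover have "(cmod (g $ i $ j))\<^sup>2 \<le> (\<Sum>k\<in>UNIV. (cmod (g $ k $ j))\<^sup>2)"
    by (rule member_le_sum) auto
  ultimately show ?thesis
    by (simp add: power_le_one_iff abs_le_square_iff)
qed

lemma unitary_norm_le: "unitary (g :: 'n::finite cmat) \<Longrightarrow> norm g \<le> real CARD('n) * CARD('n)"
proof -
  assume "unitary g"
  have "norm g \<le> (\<Sum>i\<in>UNIV. \<Sum>j\<in>UNIV. norm (g $ i $ j))"
    unfolding norm_vec_def
    by (intro order_trans[OF L2_set_le_sum] sum_mono) (auto simp: L2_set_le_sum)
  also have "\<dots> \<le> (\<Sum>i\<in>(UNIV::'n set). \<Sum>j\<in>(UNIV::'n set). 1)"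
    by (intro sum_mono unitary_nth_le_1[OF \<open>unitary g\<close>])
  finally show ?thesis
    by simp
qed

lemma un_iff: "x \<in> un \<longleftrightarrow> (\<forall>i j. cnj (x $ j $ i) = - x $ i $ j)"
  by (auto simp: un_def cadj_def vec_eq_iff)

lemma un_add: "x \<in> un \<Longrightarrow> y \<in> un \<Longrightarrow> x + y \<in> un"
  and un_diff: "x \<in> un \<Longrightarrow> y \<in> un \<Longrightarrow> x - y \<in> un"
  and un_minus: "x \<in> un \<Longrightarrow> - x \<in> un"
  by (auto simp: un_iff)

lemma bracket_un: "x \<in> un \<Longrightarrow> y \<in> un \<Longrightarrow> bracket x y \<in> un"
  unfolding un_def bracket_def
  by (simp add: cadj_mult cadj_diff matrix_mult_minus_left matrix_mult_minus_right)

section \<open>The centralizer of a diagonal matrix\<close>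

text \<open>The entrywise form of \<open>\<pi>\<^sub>a\<close> for diagonal \<open>a\<close>, see \<open>proj_a_eq_cent_part\<close>.\<close>

definition cent_part :: "'n::finite cmat \<Rightarrow> 'n cmat \<Rightarrow> 'n cmat" where
  "cent_part a x = (\<chi> i j. if a $ i $ i = a $ j $ j then x $ i $ j else 0)"

lemma cent_part_nth [simp]:
  "cent_part a x $ i $ j = (if a $ i $ i = a $ j $ j then x $ i $ j else 0)"
  by (simp add: cent_part_def)

lemma bounded_linear_cent_part: "bounded_linear (cent_part a)"
proof -
  have "linear (cent_part a)"
    by (auto intro!: linearI simp: vec_eq_iff)
  then show ?thesis
    using linear_conv_bounded_linear by blast
qed

lemma cent_part_idem [simp]: "cent_part a (cent_part a x) = cent_part a x"
  and cent_part_add: "cent_part a (x + y) = cent_part a x + cent_part a y"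
  and cent_part_diff: "cent_part a (x - y) = cent_part a x - cent_part a y"
  and cent_part_minus: "cent_part a (- x) = - cent_part a x"
  by (simp_all add: vec_eq_iff)

lemma cent_part_un: "x \<in> un \<Longrightarrow> cent_part a x \<in> un"
  by (auto simp: un_iff)

lemma diag_mult_nth:
  assumes "is_diag a"
  shows "(x ** a) $ i $ j = x $ i $ j * a $ j $ j" and "(a ** x) $ i $ j = a $ i $ i * x $ i $ j"
proof -
  have "(x ** a) $ i $ j = (\<Sum>k\<in>UNIV. x $ i $ k * a $ k $ j)"
    by (simp add: matrix_matrix_mult_def)
  also have "\<dots> = (\<Sum>k\<in>UNIV. if k = j then x $ i $ j * a $ j $ j else 0)"
    using assms unfolding is_diag_def by (intro sum.cong) auto
  finally show "(x ** a) $ i $ j = x $ i $ j * a $ j $ j"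
    by simp
  have "(a ** x) $ i $ j = (\<Sum>k\<in>UNIV. a $ i $ k * x $ k $ j)"
    by (simp add: matrix_matrix_mult_def)
  also have "\<dots> = (\<Sum>k\<in>UNIV. if k = i then a $ i $ i * x $ i $ j else 0)"
    using assms unfolding is_diag_def by (intro sum.cong) auto
  finally show "(a ** x) $ i $ j = a $ i $ i * x $ i $ j"
    by simp
qed

lemma cent_iff:
  assumes "is_diag a"
  shows "x \<in> cent a \<longleftrightarrow> x \<in> un \<and> cent_part a x = x"
proof -
  have "x ** a = a ** x \<longleftrightarrow> (\<forall>i j. x $ i $ j * a $ j $ j = a $ i $ i * x $ i $ j)"
    by (simp add: vec_eq_iff diag_mult_nth[OF assms])
  also have "\<dots> \<longleftrightarrow> cent_part a x = x"
    by (auto simp: vec_eq_iff algebra_simps) metis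
  finally show ?thesis
    unfolding cent_def by blast
qed

lemma cent_nth_eq_0:
  assumes "is_diag a" and "w \<in> cent a" and "a $ i $ i \<noteq> a $ k $ k"
  shows "w $ i $ k = 0"
proof -
  have "cent_part a w $ i $ k = w $ i $ k"
    using assms(1,2) cent_iff by metis
  then show ?thesis
    using assms(3) by simp
qed

lemma ip_eq_sum: "ip y z = - Re (\<Sum>i\<in>UNIV. \<Sum>k\<in>UNIV. y $ i $ k * z $ k $ i)"
  by (simp add: ip_def mtrace_def matrix_matrix_mult_def)

lemma cent_perp_iff:
  assumes diag: "is_diag a"
  shows "y \<in> cent_perp a \<longleftrightarrow> y \<in> un \<and> cent_part a y = 0"
proof
  assume y: "y \<in> un \<and> cent_part a y = 0"
  have "ip y z = 0" if "z \<in> cent a" for z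
  proof -
    have "y $ i $ k * z $ k $ i = 0" for i k
    proof (cases "a $ i $ i = a $ k $ k")
      case True
      then have "y $ i $ k = cent_part a y $ i $ k"
        by simp
      then show ?thesis
        using y by simp
    next
      case False
      then show ?thesis
        using cent_nth_eq_0[OF diag that, of k i] by simp
    qed
    then show ?thesis
      by (simp only: ip_eq_sum sum.neutral_const) simp
  qed
  then show "y \<in> cent_perp a"
    using y by (simp add: cent_perp_def)
next
  assume y: "y \<in> cent_perp a"
  then have "y \<in> un"
    by (simp add: cent_perp_def)
  have "cent_part a y \<in> cent a"
    using cent_iff[OF diag] cent_part_un[OF \<open>y \<in> un\<close>] by simp
  then have "ip y (cent_part a y) = 0"
    using y unfolding cent_perp_def by blast
  \<comment> \<open>for skew-Hermitian \<open>y\<close>, \<open>ip y (cent_part a y)\<close> is the sum of the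
    \<open>|y\<^sub>i\<^sub>k|\<^sup>2\<close> over the entries with \<open>a\<^sub>i\<^sub>i = a\<^sub>k\<^sub>k\<close>\<close>
  moreover have entry: "y $ i $ k * cent_part a y $ k $ i
      = - complex_of_real (if a $ i $ i = a $ k $ k then (cmod (y $ i $ k))\<^sup>2 else 0)" for i k
  proof -
    have "y $ k $ i = - cnj (y $ i $ k)"
      using \<open>y \<in> un\<close> unfolding un_iff by (metis minus_minus)
    then show ?thesis
      using complex_norm_square[of "y $ i $ k"] by auto
  qed
  ultimately have "(\<Sum>i\<in>UNIV. \<Sum>k\<in>UNIV. if a $ i $ i = a $ k $ k then (cmod (y $ i $ k))\<^sup>2 else 0) = 0"
    by (simp only: ip_eq_sum entry sum_negf of_real_sum[symmetric]) simp
  then have "(\<Sum>k\<in>UNIV. if a $ i $ i = a $ k $ k then (cmod (y $ i $ k))\<^sup>2 else 0) = 0" for i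
    by (subst (asm) sum_nonneg_eq_0_iff) (auto intro!: sum_nonneg)
  then have "(if a $ i $ i = a $ k $ k then (cmod (y $ i $ k))\<^sup>2 else 0) = 0" for i k
    by (subst (asm) sum_nonneg_eq_0_iff) auto
  then have "y $ i $ k = 0" if "a $ i $ i = a $ k $ k" for i k
    using that by (metis norm_eq_zero power_zero_numeral zero_eq_power2)
  then have "cent_part a y = 0"
    by (simp add: vec_eq_iff)
  then show "y \<in> un \<and> cent_part a y = 0"
    using \<open>y \<in> un\<close> by simp
qed

lemma proj_a_eq_cent_part:
  assumes diag: "is_diag a" and x: "x \<in> un"
  shows "proj_a a x = cent_part a x"
  unfolding proj_a_def
proof (rule the_equality)
  have in_cent: "cent_part a x \<in> cent a"
    using cent_iff[OF diag] cent_part_un[OF x] by simp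
  have perp: "x - cent_part a x \<in> cent_perp a"
    using cent_perp_iff[OF diag] un_diff[OF x cent_part_un[OF x]] by (simp add: cent_part_diff)
  then show "cent_part a x \<in> cent a \<and> (\<forall>z\<in>cent a. ip (x - cent_part a x) z = 0)"
    using in_cent unfolding cent_perp_def by blast
  fix y assume y: "y \<in> cent a \<and> (\<forall>z\<in>cent a. ip (x - y) z = 0)"
  then have "x - y \<in> cent_perp a"
    using un_diff[OF x] unfolding cent_def cent_perp_def by blast
  then have "cent_part a x = cent_part a y"
    using cent_perp_iff[OF diag] by (simp add: cent_part_diff)
  also have "\<dots> = y"
    using y cent_iff[OF diag] by blast
  finally show "y = cent_part a x" ..
qed

lemma cent_perp_nth_eq_0:
  assumes "is_diag a" and "u \<in> cent_perp a" and "a $ i $ i = a $ k $ k"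
  shows "u $ i $ k = 0"
proof -
  have "cent_part a u = 0"
    using assms(1,2) cent_perp_iff by blast
  then have "cent_part a u $ i $ k = 0"
    by simp
  then show ?thesis
    using assms(3) by simp
qed

lemma cent_part_bracket_cent_perp_cent:
  assumes diag: "is_diag a" and u: "u \<in> cent_perp a" and w: "w \<in> cent a"
  shows "cent_part a (bracket u w) = 0"
proof -
  note u0 = cent_perp_nth_eq_0[OF diag u] and w0 = cent_nth_eq_0[OF diag w]
  have uw: "u $ i $ k * w $ k $ j = 0" if "a $ i $ i = a $ j $ j" for i j k
    using that u0[of i k] w0[of k j] by (cases "a $ i $ i = a $ k $ k") auto
  have wu: "w $ i $ k * u $ k $ j = 0" if "a $ i $ i = a $ j $ j" for i j k
    using that w0[of i k] u0[of k j] by (cases "a $ i $ i = a $ k $ k") auto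
  have "bracket u w $ i $ j = 0" if "a $ i $ i = a $ j $ j" for i j
  proof -
    have "bracket u w $ i $ j = (\<Sum>k\<in>UNIV. u $ i $ k * w $ k $ j) - (\<Sum>k\<in>UNIV. w $ i $ k * u $ k $ j)"
      by (simp add: bracket_def matrix_matrix_mult_def)
    then show ?thesis
      by (simp only: uw[OF that] wu[OF that] sum.neutral_const diff_self)
  qed
  then show ?thesis
    by (simp add: vec_eq_iff)
qed

lemma cent_perp_bound_bracket:
  assumes diag: "is_diag a"
  obtains K where "\<And>u. u \<in> cent_perp a \<Longrightarrow> norm u \<le> K * norm (bracket u a)"
proof
  define c where "c i j = (if a $ i $ i = a $ j $ j then 0 else 1 / cmod (a $ j $ j - a $ i $ i))" for i j
  fix u assume u: "u \<in> cent_perp a"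
  have entry: "norm (u $ i $ j) \<le> c i j * norm (bracket u a)" for i j
  proof (cases "a $ i $ i = a $ j $ j")
    case True
    then show ?thesis
      using cent_perp_nth_eq_0[OF diag u] by (simp add: c_def)
  next
    case False
    have "bracket u a $ i $ j = u $ i $ j * (a $ j $ j - a $ i $ i)"
      by (simp add: bracket_def diag_mult_nth[OF diag] algebra_simps)
    then have "norm (u $ i $ j) * cmod (a $ j $ j - a $ i $ i) = norm (bracket u a $ i $ j)"
      by (simp add: norm_mult)
    also have "\<dots> \<le> norm (bracket u a)"
      using Finite_Cartesian_Product.norm_nth_le[of "bracket u a $ i" j]
        Finite_Cartesian_Product.norm_nth_le[of "bracket u a" i] by linarith
    finally show ?thesis
      using False by (simp add: c_def field_simps)
  qed
  have "norm u \<le> (\<Sum>i\<in>UNIV. \<Sum>j\<in>UNIV. norm (u $ i $ j))"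
    unfolding norm_vec_def
    by (intro order_trans[OF L2_set_le_sum] sum_mono) (auto simp: L2_set_le_sum)
  also have "\<dots> \<le> (\<Sum>i\<in>UNIV. \<Sum>j\<in>UNIV. c i j * norm (bracket u a))"
    by (intro sum_mono entry)
  finally show "norm u \<le> (\<Sum>i\<in>UNIV. \<Sum>j\<in>UNIV. c i j) * norm (bracket u a)"
    by (simp add: sum_distrib_right)
qed

lemma has_vector_derivative_in_kernel:
  assumes "bounded_linear L" and "\<And>t. L (f t) = 0" and "(f has_vector_derivative f') (at x)"
  shows "L f' = 0"
proof -
  have "((\<lambda>t. L (f t)) has_vector_derivative L f') (at x)"
    by (rule bounded_linear.has_vector_derivative[OF assms(1,3)])
  moreover have "((\<lambda>t. L (f t)) has_vector_derivative 0) (at x)"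
    using assms(2) by simp
  ultimately show ?thesis
    by (rule vector_derivative_unique_at)
qed

lemma has_vector_derivative_un:
  assumes "\<And>t. f t \<in> un" and "(f has_vector_derivative f') (at x)"
  shows "f' \<in> un"
proof -
  have "bounded_linear (\<lambda>X::'n::finite cmat. cadj X + X)"
    by (intro bounded_linear_add bounded_linear_cadj bounded_linear_ident)
  then have "cadj f' + f' = 0"
    by (rule has_vector_derivative_in_kernel[OF _ _ assms(2)]) (use assms(1) in \<open>simp add: un_def\<close>)
  then show ?thesis
    unfolding un_def by (simp add: eq_neg_iff_add_eq_0)
qed

lemma has_vector_derivative_cent:
  assumes diag: "is_diag a" and f: "\<And>t. f t \<in> cent a" and f': "(f has_vector_derivative f') (at x)"
  shows "f' \<in> cent a"
proof -
  have "bounded_linear (\<lambda>X. X - cent_part a X)"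
    by (intro bounded_linear_sub bounded_linear_ident bounded_linear_cent_part)
  then have "f' - cent_part a f' = 0"
    by (rule has_vector_derivative_in_kernel[OF _ _ f']) (use f cent_iff[OF diag] in simp)
  moreover have "f' \<in> un"
    using f cent_def by (intro has_vector_derivative_un[OF _ f']) blast
  ultimately show ?thesis
    using cent_iff[OF diag] by simp
qed

lemma has_vector_derivative_cent_perp:
  assumes diag: "is_diag a" and f: "\<And>t. f t \<in> cent_perp a"
    and f': "(f has_vector_derivative f') (at x)"
  shows "f' \<in> cent_perp a"
proof -
  have "cent_part a f' = 0"
    by (rule has_vector_derivative_in_kernel[OF bounded_linear_cent_part _ f'])
      (use f cent_perp_iff[OF diag] in simp)
  moreover have "f' \<in> un"
    using f cent_perp_def by (intro has_vector_derivative_un[OF _ f']) blast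
  ultimately show ?thesis
    using cent_perp_iff[OF diag] by simp
qed

lemma correction_cent_perp_iff:
  assumes diag: "is_diag a" and u: "u \<in> cent_perp a" and v: "v \<in> un" and v': "v' \<in> cent_perp a"
    and w: "w \<in> cent a" and w': "w' \<in> cent a"
  shows "v' + w' + bracket u (v + w) \<in> cent_perp a \<longleftrightarrow> w' = - cent_part a (bracket u v)"
proof -
  have "u \<in> un" "w \<in> un" "v' \<in> un" "w' \<in> un"
    using u w v' w' unfolding cent_def cent_perp_def by auto
  then have "v' + w' + bracket u (v + w) \<in> un"
    using v by (intro un_add bracket_un)
  moreover have "cent_part a (v' + w' + bracket u (v + w)) = w' + cent_part a (bracket u v)"
    using v' w' cent_part_bracket_cent_perp_cent[OF diag u w] cent_iff[OF diag] cent_perp_iff[OF diag]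
    by (simp add: cent_part_add bounded_bilinear.add_right[OF bounded_bilinear_bracket])
  ultimately show ?thesis
    using cent_perp_iff[OF diag] by (auto simp: eq_neg_iff_add_eq_0)
qed

section \<open>Integrals over half-lines and decay\<close>

lemma integrable_inverse_1_plus_square: "integrable lborel (\<lambda>y::real. 1 / (1 + y\<^sup>2))"
proof -
  have "set_integrable lborel (einterval (-\<infinity>) \<infinity>) (\<lambda>y::real. 1 / (1 + y\<^sup>2))"
  proof (rule interval_integral_FTC_nonneg(1)[where F = arctan and A = "- (pi / 2)" and B = "pi / 2"])
    fix x :: real
    show "DERIV arctan x :> 1 / (1 + x\<^sup>2)"
      using DERIV_arctan[of x] by (simp add: divide_inverse)
    have "1 + x\<^sup>2 \<noteq> 0"
      using zero_le_power2[of x] by linarith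
    then show "isCont (\<lambda>y::real. 1 / (1 + y\<^sup>2)) x"
      by (intro continuous_intros) (auto simp: add_nonneg_eq_0_iff)
  next
    show "((arctan \<circ> real_of_ereal) \<longlongrightarrow> - (pi / 2)) (at_right (-\<infinity>))"
      by (simp add: ereal_tendsto_simps1 tendsto_arctan_at_bot)
    show "((arctan \<circ> real_of_ereal) \<longlongrightarrow> pi / 2) (at_left \<infinity>)"
      by (simp add: ereal_tendsto_simps1 tendsto_arctan_at_top)
  qed auto
  then show ?thesis
    by (simp add: set_integrable_def)
qed

lemma integrable_if_inverse_square_decay:
  fixes p :: "real \<Rightarrow> 'a::euclidean_space"
  assumes "continuous_on UNIV p" and "bounded (range (\<lambda>y. (1 + y\<^sup>2) *\<^sub>R p y))"
  shows "integrable lborel p"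
proof -
  obtain C where C: "\<And>y. norm ((1 + y\<^sup>2) *\<^sub>R p y) \<le> C"
    using assms(2) unfolding bounded_iff by blast
  show ?thesis
  proof (rule Bochner_Integration.integrable_bound)
    show "integrable lborel (\<lambda>y::real. C * (1 / (1 + y\<^sup>2)))"
      using integrable_inverse_1_plus_square by (rule integrable_mult_right)
    show "p \<in> borel_measurable lborel"
      using borel_measurable_continuous_onI[OF assms(1)] by simp
    have "norm (p y) \<le> norm (C * (1 / (1 + y\<^sup>2)))" for y
    proof -
      have pos: "0 < 1 + y\<^sup>2"
        by (simp add: add_pos_nonneg)
      then have "(1 + y\<^sup>2) * norm (p y) \<le> C"
        using C[of y] by simp
      moreover have "0 \<le> C"
        using C[of y] norm_ge_zero order_trans by blast
      ultimately show ?thesis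
        using pos by (simp add: field_simps)
    qed
    then show "AE y in lborel. norm (p y) \<le> norm (C * (1 / (1 + y\<^sup>2)))"
      by simp
  qed
qed

lemma indefinite_integral_at_bot:
  fixes p :: "real \<Rightarrow> 'a::euclidean_space"
  assumes int: "integrable lborel p" and cont: "continuous_on UNIV p"
  shows "p integrable_on {..x}"
    and "((\<lambda>x. integral {..x} p) has_vector_derivative p x) (at x)"
    and "((\<lambda>x. integral {..x} p) \<longlongrightarrow> 0) at_bot"
proof -
  have set_int: "set_integrable lborel A p" if "A \<in> sets lborel" for A
    unfolding set_integrable_def using that int by (rule integrable_mult_indicator)
  have hk: "p integrable_on A" "(LINT x:A|lborel. p x) = integral A p" if "A \<in> sets lborel" for A
    using set_borel_integral_eq_integral[OF set_int[OF that]] by auto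
  show int_atMost: "p integrable_on {..x}" for x
    using hk by simp
  have split: "integral {..b} p = integral {..a} p + integral {a..b} p" if "a \<le> b" for a b
  proof -
    have "(p has_integral (integral {..a} p + integral {a..b} p)) ({..a} \<union> {a..b})"
    proof (rule has_integral_Un)
      have "{..a} \<inter> {a..b} = {a}"
        using that by auto
      then show "negligible ({..a} \<inter> {a..b})"
        by simp
    qed (use int_atMost hk(1)[of "{a..b}"] in \<open>auto simp: integrable_integral\<close>)
    moreover have "{..a} \<union> {a..b} = {..b}"
      using that by auto
    ultimately show ?thesis
      by (simp add: integral_unique)
  qed
  have "((\<lambda>a. set_lebesgue_integral lborel {a..0} p) \<longlongrightarrow> set_lebesgue_integral lborel {..0} p) at_bot"
    by (rule tendsto_set_lebesgue_integral_at_bot) (auto intro: set_int)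
  then have "((\<lambda>a. integral {..0} p - integral {a..0} p) \<longlongrightarrow> integral {..0} p - integral {..0} p) at_bot"
    using hk(2) by (intro tendsto_intros) simp
  moreover have "eventually (\<lambda>a. integral {..0} p - integral {a..0} p = integral {..a} p) at_bot"
    using eventually_le_at_bot[of 0] by eventually_elim (simp add: split)
  ultimately show "((\<lambda>x. integral {..x} p) \<longlongrightarrow> 0) at_bot"
    by (simp add: Lim_transform_eventually)
  have "((\<lambda>y. integral {x - 1..y} p) has_vector_derivative p x) (at x within {x - 1..x + 1})"
    by (rule integral_has_vector_derivative) (auto intro: continuous_on_subset[OF cont])
  then have "((\<lambda>y. integral {..x - 1} p + integral {x - 1..y} p) has_vector_derivative p x) (at x)"
    using has_vector_derivative_add[OF has_vector_derivative_const]
    by (fastforce simp: at_within_Icc_at)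
  then show "((\<lambda>x. integral {..x} p) has_vector_derivative p x) (at x)"
  proof (rule has_vector_derivative_transform_within_open[of _ _ _ "{x - 1<..}"])
    fix y assume "y \<in> {x - 1<..}"
    then show "integral {..x - 1} p + integral {x - 1..y} p = integral {..y} p"
      using split[of "x - 1" y] by simp
  qed auto
qed

lemma antiderivative_unique_at_bot:
  fixes f h :: "real \<Rightarrow> 'a::real_normed_vector"
  assumes "\<And>x. (f has_vector_derivative p x) (at x)" and "\<And>x. (h has_vector_derivative p x) (at x)"
    and "(f \<longlongrightarrow> 0) at_bot" and "(h \<longlongrightarrow> 0) at_bot"
  shows "f = h"
proof -
  have "\<exists>c. \<forall>x\<in>UNIV. f x - h x = c"
  proof (rule has_derivative_zero_constant[OF convex_UNIV])
    fix x
    have "((\<lambda>t. f t - h t) has_vector_derivative p x - p x) (at x)"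
      by (intro has_vector_derivative_diff assms(1,2))
    then show "((\<lambda>t. f t - h t) has_derivative (\<lambda>_. 0)) (at x within UNIV)"
      by (simp add: has_vector_derivative_def)
  qed
  then obtain c where c: "\<And>x. f x - h x = c"
    by blast
  have "((\<lambda>t. f t - h t) \<longlongrightarrow> 0 - 0) at_bot"
    by (intro tendsto_diff assms(3,4))
  then have "c = 0"
    by (simp add: c tendsto_const_iff)
  then show ?thesis
    using c by (simp add: fun_eq_iff)
qed

lemma integral_in_kernel:
  assumes "bounded_linear L" and "p integrable_on S" and "\<And>y. L (p y) = 0"
  shows "L (integral S p) = 0"
  using integral_linear[OF assms(2,1)] assms(3) by (simp add: o_def)

lemma integral_cent:
  assumes diag: "is_diag a" and int: "p integrable_on S" and p: "\<And>y. p y \<in> cent a"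
  shows "integral S p \<in> cent a"
proof -
  have "bounded_linear (\<lambda>X::'n::finite cmat. cadj X + X)"
    by (intro bounded_linear_add bounded_linear_cadj bounded_linear_ident)
  then have "cadj (integral S p) + integral S p = 0"
    by (rule integral_in_kernel[OF _ int]) (use p in \<open>simp add: cent_def un_def\<close>)
  moreover have "bounded_linear (\<lambda>X. X - cent_part a X)"
    by (intro bounded_linear_sub bounded_linear_ident bounded_linear_cent_part)
  then have "integral S p - cent_part a (integral S p) = 0"
    by (rule integral_in_kernel[OF _ int]) (use p cent_iff[OF diag] in simp)
  ultimately show ?thesis
    using cent_iff[OF diag] by (simp add: un_def eq_neg_iff_add_eq_0)
qed

lemma schwartz_inverse_square_decay:
  assumes "schwartz f"
  shows "bounded (range (\<lambda>x. (1 + x\<^sup>2) *\<^sub>R f x))"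
proof -
  have "\<exists>B. \<forall>x. \<bar>x\<bar> ^ m * norm (f x) \<le> B" for m
  proof -
    have "bounded (range (\<lambda>x. \<bar>x\<bar> ^ m * norm (vderiv 0 f x)))"
      using assms unfolding schwartz_def by blast
    then obtain B where "\<And>x. norm (\<bar>x\<bar> ^ m * norm (vderiv 0 f x)) \<le> B"
      unfolding bounded_iff by auto
    then have "\<bar>x\<bar> ^ m * norm (f x) \<le> B" for x
      by (simp add: abs_mult)
    then show ?thesis
      by blast
  qed
  then obtain B0 B2 where B0: "\<And>x. \<bar>x\<bar> ^ 0 * norm (f x) \<le> B0"
    and B2: "\<And>x. \<bar>x\<bar> ^ 2 * norm (f x) \<le> B2"
    by meson
  have split: "norm ((1 + x\<^sup>2) *\<^sub>R f x) = \<bar>x\<bar> ^ 0 * norm (f x) + \<bar>x\<bar> ^ 2 * norm (f x)" for x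
    by (simp add: add_nonneg_nonneg distrib_right)
  have "norm ((1 + x\<^sup>2) *\<^sub>R f x) \<le> B0 + B2" for x
    using split[of x] B0[of x] B2[of x] by linarith
  then show ?thesis
    unfolding bounded_iff by blast
qed

lemma bounded_range_schwartz:
  assumes "schwartz f"
  shows "bounded (range f)"
proof -
  have "bounded (range (\<lambda>x. \<bar>x\<bar> ^ 0 * norm (vderiv 0 f x)))"
    using assms unfolding schwartz_def by blast
  then show ?thesis
    by (simp add: bounded_norm_comp)
qed

lemma bounded_range_bilinear:
  assumes "bounded_bilinear B" and "bounded (range f)" and "bounded (range h)"
  shows "bounded (range (\<lambda>x. B (f x) (h x)))"
proof -
  obtain K where K: "\<And>a b. norm (B a b) \<le> norm a * norm b * K" and "K > 0"
    using bounded_bilinear.pos_bounded[OF assms(1)] by blast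
  obtain Cf Ch where Cf: "\<And>x. norm (f x) \<le> Cf" and Ch: "\<And>x. norm (h x) \<le> Ch"
    using assms(2,3) unfolding bounded_iff by blast
  have "norm (f x) * norm (h x) * K \<le> Cf * Ch * K" for x
    by (intro mult_right_mono mult_mono Cf Ch norm_ge_zero order_trans[OF norm_ge_zero Cf]
        less_imp_le[OF \<open>K > 0\<close>])
  then have "norm (B (f x) (h x)) \<le> Cf * Ch * K" for x
    using K[of "f x" "h x"] order_trans by blast
  then show ?thesis
    unfolding bounded_iff by blast
qed

section \<open>Moving frames along the orbit\<close>

declare vderiv.simps(2) [simp del] One_nat_def [simp del]

definition normal_correction ::
    "'n::finite cmat \<Rightarrow> (real \<Rightarrow> 'n cmat) \<Rightarrow> (real \<Rightarrow> 'n cmat) \<Rightarrow> (real \<Rightarrow> 'n cmat) \<Rightarrow> bool" where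
  "normal_correction a g v \<zeta> \<longleftrightarrow> smooth \<zeta>
     \<and> (\<forall>x. \<zeta> x \<in> {g x ** y ** matrix_inv (g x) | y. y \<in> cent a})
     \<and> (\<forall>x. vderiv 1 (\<lambda>t. g t ** v t ** matrix_inv (g t) + \<zeta> t) x
            \<in> {g x ** y ** matrix_inv (g x) | y. y \<in> cent_perp a})
     \<and> (\<zeta> \<longlongrightarrow> 0) at_bot"

locale unitary_gauge =
  fixes a :: "'n::finite cmat" and g :: "real \<Rightarrow> 'n cmat"
  assumes diag: "is_diag a"
    and smooth_g: "smooth g"
    and unitary_g: "\<And>x. unitary (g x)"
    and g_tendsto: "(g \<longlongrightarrow> mat 1) at_bot"
    and gauge_cent_perp: "\<And>x. matrix_inv (g x) ** vderiv 1 g x \<in> cent_perp a"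
    and bounded_orbit_deriv: "bounded (range (vderiv 1 (\<lambda>x. g x ** a ** matrix_inv (g x))))"
begin

definition gauge :: "real \<Rightarrow> 'n cmat" where
  "gauge x = matrix_inv (g x) ** vderiv 1 g x"

lemma matrix_inv_g: "matrix_inv (g x) = cadj (g x)"
  using unitary_matrix_inv[OF unitary_g] .

lemma inv_g_mult_g: "matrix_inv (g x) ** g x = mat 1"
  and g_mult_inv_g: "g x ** matrix_inv (g x) = mat 1"
  using unitary_g[of x] unitary_mult_cadj[OF unitary_g] by (simp_all add: matrix_inv_g unitary_def)

lemma unconj_conj: "matrix_inv (g x) ** (g x ** y ** matrix_inv (g x)) ** g x = y"
  by (simp add: matrix_mul_assoc inv_g_mult_g)
    (simp add: matrix_mul_assoc[symmetric] inv_g_mult_g del: matrix_mul_assoc)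

lemma conj_mem_iff:
  "g x ** y ** matrix_inv (g x) \<in> {g x ** z ** matrix_inv (g x) | z. z \<in> S} \<longleftrightarrow> y \<in> S"
  by (auto, metis unconj_conj)

lemma gauge_mem_cent_perp: "gauge x \<in> cent_perp a"
  using gauge_cent_perp by (simp add: gauge_def)

lemma gauge_un: "gauge x \<in> un"
  using gauge_mem_cent_perp unfolding cent_perp_def by blast

lemma vderiv_g: "vderiv 1 g x = g x ** gauge x"
proof -
  have "g x ** gauge x = (g x ** matrix_inv (g x)) ** vderiv 1 g x"
    unfolding gauge_def by (rule matrix_mul_assoc)
  then show ?thesis
    by (simp add: g_mult_inv_g)
qed

lemma smooth_inv_g: "smooth (\<lambda>x. matrix_inv (g x))"
  unfolding matrix_inv_g by (rule smooth_bounded_linear[OF bounded_linear_cadj smooth_g])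

lemma has_vector_derivative_inv_g:
  "((\<lambda>t. matrix_inv (g t)) has_vector_derivative - (gauge x ** matrix_inv (g x))) (at x)"
proof -
  have "((\<lambda>t. cadj (g t)) has_vector_derivative cadj (vderiv 1 g x)) (at x)"
    by (rule bounded_linear.has_vector_derivative[OF bounded_linear_cadj smooth_has_vector_derivative[OF smooth_g]])
  moreover have "cadj (vderiv 1 g x) = - (gauge x ** matrix_inv (g x))"
    using gauge_un[of x]
    by (simp add: vderiv_g cadj_mult un_def matrix_inv_g matrix_mult_minus_left)
  ultimately show ?thesis
    by (simp add: matrix_inv_g)
qed

lemma has_vector_derivative_conj:
  assumes "(y has_vector_derivative y') (at x)"
  shows "((\<lambda>t. g t ** y t ** matrix_inv (g t)) has_vector_derivative
            g x ** (y' + bracket (gauge x) (y x)) ** matrix_inv (g x)) (at x)"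
proof -
  have "((\<lambda>t. g t ** y t ** matrix_inv (g t)) has_vector_derivative
          g x ** y x ** (- (gauge x ** matrix_inv (g x)))
          + (g x ** y' + vderiv 1 g x ** y x) ** matrix_inv (g x)) (at x)"
    by (intro bounded_bilinear.has_vector_derivative[OF bounded_bilinear_matrix_mult]
        has_vector_derivative_inv_g assms smooth_has_vector_derivative[OF smooth_g])
  moreover have "g x ** y x ** (- (gauge x ** matrix_inv (g x)))
          + (g x ** y' + vderiv 1 g x ** y x) ** matrix_inv (g x)
      = g x ** (y' + bracket (gauge x) (y x)) ** matrix_inv (g x)"
    by (simp add: vderiv_g bracket_def matrix_mult_add_left matrix_mult_add_right
        matrix_mult_diff_left matrix_mult_diff_right matrix_mult_minus_right matrix_mul_assoc)
  ultimately show ?thesis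
    by simp
qed

lemma smooth_conj: "smooth y \<Longrightarrow> smooth (\<lambda>t. g t ** y t ** matrix_inv (g t))"
  by (intro smooth_bounded_bilinear[OF bounded_bilinear_matrix_mult] smooth_g smooth_inv_g)

lemma smooth_unconj: "smooth \<zeta> \<Longrightarrow> smooth (\<lambda>t. matrix_inv (g t) ** \<zeta> t ** g t)"
  by (intro smooth_bounded_bilinear[OF bounded_bilinear_matrix_mult] smooth_g smooth_inv_g)

lemma inv_g_tendsto: "((\<lambda>x. matrix_inv (g x)) \<longlongrightarrow> mat 1) at_bot"
  using bounded_linear.tendsto[OF bounded_linear_cadj g_tendsto] by (simp add: matrix_inv_g)

lemma smooth_gauge: "smooth gauge"
  unfolding gauge_def[abs_def]
  by (rule smooth_bounded_bilinear[OF bounded_bilinear_matrix_mult smooth_inv_g smooth_vderiv_1[OF smooth_g]])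

lemma bounded_gauge: "bounded (range gauge)"
proof -
  have orbit_deriv: "vderiv 1 (\<lambda>t. g t ** a ** matrix_inv (g t)) x
      = g x ** bracket (gauge x) a ** matrix_inv (g x)" for x
    using has_vector_derivative_conj[of "\<lambda>_. a" 0 x] by (simp add: vderiv_1_at)
  have unitary_bounded: "bounded (range g)" "bounded (range (\<lambda>x. matrix_inv (g x)))"
    using unitary_norm_le unitary_g unitary_cadj unfolding bounded_iff matrix_inv_g by blast+
  have "bounded (range (\<lambda>x. matrix_inv (g x) ** vderiv 1 (\<lambda>t. g t ** a ** matrix_inv (g t)) x ** g x))"
    by (intro bounded_range_bilinear[OF bounded_bilinear_matrix_mult] unitary_bounded bounded_orbit_deriv)
  then have "bounded (range (\<lambda>x. bracket (gauge x) a))"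
    by (simp add: orbit_deriv unconj_conj)
  then obtain B where B: "\<And>x. norm (bracket (gauge x) a) \<le> B"
    unfolding bounded_iff by auto
  obtain K where "\<And>u. u \<in> cent_perp a \<Longrightarrow> norm u \<le> K * norm (bracket u a)"
    using cent_perp_bound_bracket[OF diag] by blast
  then have "norm (gauge x) \<le> \<bar>K\<bar> * B" for x
    using gauge_mem_cent_perp[of x] B[of x]
    by (meson abs_ge_self abs_ge_zero mult_mono norm_ge_zero order_trans)
  then show ?thesis
    unfolding bounded_iff by blast
qed

end

locale tangent_field = unitary_gauge a g for a :: "'n::finite cmat" and g +
  fixes v :: "real \<Rightarrow> 'n cmat"
  assumes schwartz_v: "schwartz v"
    and v_cent_perp: "\<And>x. v x \<in> cent_perp a"
begin

lemma smooth_v: "smooth v"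
  using schwartz_v unfolding schwartz_def by blast

lemma vderiv_v_cent_perp: "vderiv 1 v x \<in> cent_perp a"
  by (rule has_vector_derivative_cent_perp[OF diag v_cent_perp smooth_has_vector_derivative[OF smooth_v]])

lemma v_un: "v x \<in> un"
  using v_cent_perp unfolding cent_perp_def by blast

lemma proj_a_bracket: "proj_a a (bracket (gauge x) (v x)) = cent_part a (bracket (gauge x) (v x))"
  by (intro proj_a_eq_cent_part diag bracket_un gauge_un v_un)

lemma smooth_cent_part_bracket: "smooth (\<lambda>x. cent_part a (bracket (gauge x) (v x)))"
  by (intro smooth_bounded_linear[OF bounded_linear_cent_part]
      smooth_bounded_bilinear[OF bounded_bilinear_bracket] smooth_gauge smooth_v)

lemma integrable_cent_part_bracket: "integrable lborel (\<lambda>x. cent_part a (bracket (gauge x) (v x)))"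
proof (rule integrable_if_inverse_square_decay)
  show "continuous_on UNIV (\<lambda>x. cent_part a (bracket (gauge x) (v x)))"
    by (rule smooth_imp_continuous_on[OF smooth_cent_part_bracket])
  have "bounded (range (\<lambda>x. bracket (gauge x) ((1 + x\<^sup>2) *\<^sub>R v x)))"
    by (intro bounded_range_bilinear[OF bounded_bilinear_bracket] bounded_gauge
        schwartz_inverse_square_decay[OF schwartz_v])
  then have "bounded (cent_part a ` range (\<lambda>x. bracket (gauge x) ((1 + x\<^sup>2) *\<^sub>R v x)))"
    by (rule bounded_linear_image[OF _ bounded_linear_cent_part])
  then show "bounded (range (\<lambda>x. (1 + x\<^sup>2) *\<^sub>R cent_part a (bracket (gauge x) (v x))))"
    by (simp add: image_image bounded_bilinear.scaleR_right[OF bounded_bilinear_bracket]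
        linear_cmul[OF bounded_linear.linear[OF bounded_linear_cent_part]])
qed

lemmas Top_integral_at_bot =
  indefinite_integral_at_bot[OF integrable_cent_part_bracket
    smooth_imp_continuous_on[OF smooth_cent_part_bracket]]

lemma Top_eq_integral: "Top a gauge v x = integral {..x} (\<lambda>y. cent_part a (bracket (gauge y) (v y)))"
  by (simp add: Top_def proj_a_bracket)

lemma has_vector_derivative_Top:
  "(Top a gauge v has_vector_derivative cent_part a (bracket (gauge x) (v x))) (at x)"
  unfolding Top_eq_integral[abs_def] by (rule Top_integral_at_bot(2))

lemma Top_tendsto_0: "(Top a gauge v \<longlongrightarrow> 0) at_bot"
  unfolding Top_eq_integral[abs_def] by (rule Top_integral_at_bot(3))

lemma smooth_Top: "smooth (Top a gauge v)"
  by (rule smooth_if_has_vector_derivative[OF has_vector_derivative_Top smooth_cent_part_bracket])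

lemma Top_cent: "Top a gauge v x \<in> cent a"
  unfolding Top_eq_integral
proof (rule integral_cent[OF diag Top_integral_at_bot(1)])
  show "cent_part a (bracket (gauge y) (v y)) \<in> cent a" for y
    unfolding cent_iff[OF diag] by (simp add: cent_part_un bracket_un gauge_un v_un)
qed

lemma vderiv_conj_add:
  assumes "smooth w"
  shows "vderiv 1 (\<lambda>t. g t ** v t ** matrix_inv (g t) + g t ** w t ** matrix_inv (g t)) x
    = g x ** (vderiv 1 v x + vderiv 1 w x + bracket (gauge x) (v x + w x)) ** matrix_inv (g x)"
proof -
  have "((\<lambda>t. v t + w t) has_vector_derivative vderiv 1 v x + vderiv 1 w x) (at x)"
    by (intro has_vector_derivative_add smooth_has_vector_derivative smooth_v assms)
  from has_vector_derivative_conj[OF this] show ?thesis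
    by (simp add: vderiv_1_at matrix_mult_add_left matrix_mult_add_right add.assoc)
qed

lemma vderiv_conj_add_tangent_iff:
  assumes "smooth w" and "\<And>t. w t \<in> cent a"
  shows "vderiv 1 (\<lambda>t. g t ** v t ** matrix_inv (g t) + g t ** w t ** matrix_inv (g t)) x
      \<in> {g x ** y ** matrix_inv (g x) | y. y \<in> cent_perp a}
    \<longleftrightarrow> vderiv 1 w x = - cent_part a (bracket (gauge x) (v x))"
  unfolding vderiv_conj_add[OF assms(1)] conj_mem_iff
  by (intro correction_cent_perp_iff diag gauge_mem_cent_perp v_un vderiv_v_cent_perp assms(2)
      has_vector_derivative_cent[OF diag assms(2) smooth_has_vector_derivative[OF assms(1)]])

lemma minus_Top_cent: "- Top a gauge v x \<in> cent a"
  using Top_cent[of x] cent_iff[OF diag] by (simp add: un_minus cent_part_minus)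

lemma smooth_minus_Top: "smooth (\<lambda>x. - Top a gauge v x)"
  by (rule smooth_bounded_linear[OF bounded_linear_minus[OF bounded_linear_ident] smooth_Top])

lemma has_vector_derivative_minus_Top:
  "((\<lambda>x. - Top a gauge v x) has_vector_derivative - cent_part a (bracket (gauge x) (v x))) (at x)"
  by (rule has_vector_derivative_minus[OF has_vector_derivative_Top])

lemma minus_Top_tendsto_0: "((\<lambda>x. - Top a gauge v x) \<longlongrightarrow> 0) at_bot"
  using tendsto_minus[OF Top_tendsto_0] by simp

lemma vderiv_minus_Top: "vderiv 1 (\<lambda>x. - Top a gauge v x) x = - cent_part a (bracket (gauge x) (v x))"
  by (rule vderiv_1_at[OF has_vector_derivative_minus_Top])

lemma normal_correction_eq:
  assumes "normal_correction a g v \<zeta>"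
  shows "\<zeta> = (\<lambda>t. g t ** (- Top a gauge v t) ** matrix_inv (g t))"
proof -
  have smooth_\<zeta>: "smooth \<zeta>"
    and normal: "\<And>x. \<zeta> x \<in> {g x ** y ** matrix_inv (g x) | y. y \<in> cent a}"
    and tangent: "\<And>x. vderiv 1 (\<lambda>t. g t ** v t ** matrix_inv (g t) + \<zeta> t) x
                    \<in> {g x ** y ** matrix_inv (g x) | y. y \<in> cent_perp a}"
    and \<zeta>_tendsto: "(\<zeta> \<longlongrightarrow> 0) at_bot"
    using assms by (simp_all only: normal_correction_def)
  define w where "w t = matrix_inv (g t) ** \<zeta> t ** g t" for t
  have w_cent: "w x \<in> cent a" and \<zeta>_conj: "\<zeta> x = g x ** w x ** matrix_inv (g x)" for x
  proof -
    obtain y where y: "\<zeta> x = g x ** y ** matrix_inv (g x)" "y \<in> cent a"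
      using normal[of x] by blast
    then have "w x = y"
      unfolding w_def by (simp only: unconj_conj)
    then show "w x \<in> cent a" "\<zeta> x = g x ** w x ** matrix_inv (g x)"
      using y by simp_all
  qed
  then have \<zeta>_eq: "\<zeta> = (\<lambda>t. g t ** w t ** matrix_inv (g t))"
    by (simp add: fun_eq_iff)
  have smooth_w: "smooth w"
    unfolding w_def[abs_def] by (rule smooth_unconj[OF smooth_\<zeta>])
  have "vderiv 1 w x = - cent_part a (bracket (gauge x) (v x))" for x
    using tangent[of x] unfolding \<zeta>_eq
    by (rule vderiv_conj_add_tangent_iff[OF smooth_w w_cent, THEN iffD1])
  then have w_deriv: "(w has_vector_derivative - cent_part a (bracket (gauge x) (v x))) (at x)" for x
    using smooth_has_vector_derivative[OF smooth_w, of x] by simp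
  have "(w \<longlongrightarrow> 0) at_bot"
    unfolding w_def[abs_def] by (rule tendsto_matrix_sandwich_0[OF inv_g_tendsto g_tendsto \<zeta>_tendsto])
  then have "w = (\<lambda>x. - Top a gauge v x)"
    by (rule antiderivative_unique_at_bot[OF w_deriv has_vector_derivative_minus_Top _ minus_Top_tendsto_0])
  then show ?thesis
    by (simp only: \<zeta>_eq)
qed

lemma normal_correction_minus_Top:
  "normal_correction a g v (\<lambda>t. g t ** (- Top a gauge v t) ** matrix_inv (g t))"
  unfolding normal_correction_def conj_mem_iff
proof (intro conjI allI)
  show "smooth (\<lambda>t. g t ** (- Top a gauge v t) ** matrix_inv (g t))"
    by (rule smooth_conj[OF smooth_minus_Top])
  show "- Top a gauge v x \<in> cent a" for x
    by (rule minus_Top_cent)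
  show "vderiv 1 (\<lambda>t. g t ** v t ** matrix_inv (g t) + g t ** (- Top a gauge v t) ** matrix_inv (g t)) x
      \<in> {g x ** y ** matrix_inv (g x) | y. y \<in> cent_perp a}" for x
    using vderiv_conj_add_tangent_iff[OF smooth_minus_Top minus_Top_cent] vderiv_minus_Top by blast
  show "((\<lambda>t. g t ** (- Top a gauge v t) ** matrix_inv (g t)) \<longlongrightarrow> 0) at_bot"
    by (rule tendsto_matrix_sandwich_0[OF g_tendsto inv_g_tendsto minus_Top_tendsto_0])
qed

lemma normal_correction_iff:
  "normal_correction a g v \<zeta> \<longleftrightarrow> \<zeta> = (\<lambda>t. g t ** (- Top a gauge v t) ** matrix_inv (g t))"
  using normal_correction_eq normal_correction_minus_Top by blast

lemma gauge_eq: "(\<lambda>y. matrix_inv (g y) ** vderiv 1 g y) = gauge"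
  by (rule ext) (simp only: gauge_def)

lemma Lop_eq_vderiv:
  "Lop a g v x
    = vderiv 1 (\<lambda>t. g t ** v t ** matrix_inv (g t) + g t ** (- Top a gauge v t) ** matrix_inv (g t)) x"
proof -
  have "Pop a gauge v x = vderiv 1 v x + vderiv 1 (\<lambda>x. - Top a gauge v x) x
      + bracket (gauge x) (v x + - Top a gauge v x)"
    by (simp add: Pop_def proj_perp_def proj_a_bracket vderiv_minus_Top
        bounded_bilinear.add_right[OF bounded_bilinear_bracket]
        bounded_bilinear.minus_right[OF bounded_bilinear_bracket]
        bounded_bilinear.diff_right[OF bounded_bilinear_bracket])
  then show ?thesis
    by (simp only: Lop_def gauge_eq vderiv_conj_add[OF smooth_minus_Top])
qed

end

theorem proposition3p9:
  fixes a :: "complex^'n^'n" and \<gamma> g v :: "real \<Rightarrow> complex^'n^'n"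
  assumes a_un: "a \<in> un" and a_diag: "is_diag a"
    and gamma: "\<gamma> \<in> Ca a"
    and g_smooth: "smooth g" and g_unitary: "\<forall>x. unitary (g x)"
    and g_conj: "\<forall>x. \<gamma> x = g x ** a ** matrix_inv (g x)"
    and g_lim: "(g \<longlongrightarrow> mat 1) at_bot"
    and g_gauge: "\<forall>x. matrix_inv (g x) ** vderiv 1 g x \<in> cent_perp a"
    and v_schwartz: "schwartz v" and v_perp: "\<forall>x. v x \<in> cent_perp a"
  shows "(\<exists>!\<zeta>. smooth \<zeta>
            \<and> (\<forall>x. \<zeta> x \<in> {g x ** y ** matrix_inv (g x) | y. y \<in> cent a})
            \<and> (\<forall>x. vderiv 1 (\<lambda>t. g t ** v t ** matrix_inv (g t) + \<zeta> t) x
                   \<in> {g x ** y ** matrix_inv (g x) | y. y \<in> cent_perp a})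
            \<and> (\<zeta> \<longlongrightarrow> 0) at_bot)
   \<and> (\<forall>\<zeta>. (smooth \<zeta>
            \<and> (\<forall>x. \<zeta> x \<in> {g x ** y ** matrix_inv (g x) | y. y \<in> cent a})
            \<and> (\<forall>x. vderiv 1 (\<lambda>t. g t ** v t ** matrix_inv (g t) + \<zeta> t) x
                   \<in> {g x ** y ** matrix_inv (g x) | y. y \<in> cent_perp a})
            \<and> (\<zeta> \<longlongrightarrow> 0) at_bot)
          \<longrightarrow> (\<forall>x. Lop a g v x = vderiv 1 (\<lambda>t. g t ** v t ** matrix_inv (g t) + \<zeta> t) x))"
proof -
  have "\<gamma> = (\<lambda>x. g x ** a ** matrix_inv (g x))"
    using g_conj by auto
  then have "bounded (range (vderiv 1 (\<lambda>x. g x ** a ** matrix_inv (g x))))"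
    using gamma bounded_range_schwartz unfolding Ca_def by blast
  then interpret tangent_field a g v
    using assms by unfold_locales auto
  show ?thesis
    unfolding normal_correction_def[symmetric] normal_correction_iff
    using Lop_eq_vderiv by auto
qed

end
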